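(* Let $d>0$, let $I\subseteq\mathbb{R}$ be a nonempty, non-singleton interval with $\ell(I)\geq d$, and let $f: I\to\mathbb{R}$ be bounded from below. Then the function $\widetilde{f}: I\to\mathbb{R}$ defined by $$\widetilde{f}(x):=\min\Big\{f(x),\ \inf_{t\in[x+d,\infty[\cap I}f(t)\Big\}\qquad(x\in I)$$ is the greatest $d$-periodically increasing minorant of $f$; that is, $\widetilde{f}\leq f$, $\widetilde{f}$ is $d$-periodically increasing, and every $d$-periodically increasing $g: I\to\mathbb{R}$ with $g\leq f$ satisfies $g\leq\widetilde{f}$.
   Context: $\ell(I)$ denotes the length of $I$. A function $f: I\to\mathbb{R}$ is $d$-periodically increasing if $f(x)\leq f(y)$ for all $x,y\in I$ with $y-x\geq d$. The infimum over the empty set is $+\infty$. *)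

theory Defs
  imports "HOL-Analysis.Analysis"
begin

definition interval_length :: "real set \<Rightarrow> ereal" where
  "interval_length I = Sup (ereal ` I) - Inf (ereal ` I)"

definition periodically_increasing :: "real \<Rightarrow> real set \<Rightarrow> (real \<Rightarrow> real) \<Rightarrow> bool" where
  "periodically_increasing d I f \<longleftrightarrow> (\<forall>x\<in>I. \<forall>y\<in>I. y - x \<ge> d \<longrightarrow> f x \<le> f y)"

text \<open>min of f x and the infimum of f over [x+d,oo[ \<inter> I, where the infimum of the
  empty set is +oo (so the min is then just f x).\<close>
definition pi_minorant :: "real \<Rightarrow> real set \<Rightarrow> (real \<Rightarrow> real) \<Rightarrow> real \<Rightarrow> real" where
  "pi_minorant d I f x =
     (if {x + d..} \<inter> I = {} then f x
      else min (f x) (INF t\<in>{x + d..} \<inter> I. f t))"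

end

theory Submission
  imports Defs
begin

lemma pi_minorant_le: "pi_minorant d I f x \<le> f x"
  by (simp add: pi_minorant_def)

lemma pi_minorant_le_shifted:
  assumes "bdd_below (f ` I)" and "t \<in> I" and "x + d \<le> t"
  shows "pi_minorant d I f x \<le> f t"
proof -
  have t: "t \<in> {x + d..} \<inter> I"
    using assms(2,3) by simp
  have "bdd_below (f ` ({x + d..} \<inter> I))"
    by (rule bdd_below_mono[OF assms(1)]) auto
  then have "(INF s\<in>{x + d..} \<inter> I. f s) \<le> f t"
    using t by (rule cINF_lower)
  then show ?thesis
    using t by (auto simp: pi_minorant_def)
qed

lemma le_pi_minorantI:
  assumes "c \<le> f x" and "\<And>t. t \<in> I \<Longrightarrow> x + d \<le> t \<Longrightarrow> c \<le> f t"
  shows "c \<le> pi_minorant d I f x"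
proof (cases "{x + d..} \<inter> I = {}")
  case False
  then have "c \<le> (INF t\<in>{x + d..} \<inter> I. f t)"
    by (rule cINF_greatest) (use assms(2) in auto)
  then show ?thesis
    using assms(1) False by (simp add: pi_minorant_def)
qed (simp add: pi_minorant_def assms(1))

lemma periodically_increasing_pi_minorant:
  assumes "d \<ge> 0" and "bdd_below (f ` I)"
  shows "periodically_increasing d I (pi_minorant d I f)"
  unfolding periodically_increasing_def
proof (intro ballI impI)
  fix x y assume "x \<in> I" "y \<in> I" "y - x \<ge> d"
  show "pi_minorant d I f x \<le> pi_minorant d I f y"
  proof (rule le_pi_minorantI)
    show "pi_minorant d I f x \<le> f y"
      using assms(2) \<open>y \<in> I\<close> \<open>y - x \<ge> d\<close> by (intro pi_minorant_le_shifted) auto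
    show "pi_minorant d I f x \<le> f t" if "t \<in> I" "y + d \<le> t" for t
      using assms that \<open>y - x \<ge> d\<close> by (intro pi_minorant_le_shifted) auto
  qed
qed

lemma periodically_increasing_le_pi_minorant:
  assumes "periodically_increasing d I g" and "\<forall>t\<in>I. g t \<le> f t" and "x \<in> I"
  shows "g x \<le> pi_minorant d I f x"
proof (rule le_pi_minorantI)
  show "g x \<le> f x"
    using assms(2,3) by blast
  show "g x \<le> f t" if "t \<in> I" "x + d \<le> t" for t
  proof -
    have "g x \<le> g t"
      using assms(1,3) that unfolding periodically_increasing_def by auto
    also have "\<dots> \<le> f t"
      using assms(2) that(1) by blast
    finally show ?thesis .
  qed
qed

theorem theorem3p2:
  fixes d :: real and I :: "real set" and f :: "real \<Rightarrow> real"
  assumes "d > 0"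
    and "is_interval I" and "\<exists>x\<in>I. \<exists>y\<in>I. x \<noteq> y"
    and "interval_length I \<ge> ereal d"
    and "bdd_below (f ` I)"
  shows "(\<forall>x\<in>I. pi_minorant d I f x \<le> f x)
    \<and> periodically_increasing d I (pi_minorant d I f)
    \<and> (\<forall>g. periodically_increasing d I g \<and> (\<forall>x\<in>I. g x \<le> f x)
          \<longrightarrow> (\<forall>x\<in>I. g x \<le> pi_minorant d I f x))"
  using pi_minorant_le periodically_increasing_pi_minorant[of d f I]
    periodically_increasing_le_pi_minorant assms(1,5)
  by auto

end
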